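(* Let $G$ be a finite simple graph, $r\geqslant 1$, let $\mathcal{C}$ be a minimal $r$-system of chorded cycles in $G$, and let $C\in\mathcal{C}$. Suppose $u$ is a vertex of $G$ not lying on any cycle of $\mathcal{C}$ with $d_C(u)\geqslant 3$. Then one of the following holds: (1) $|V(C)|=4$ and $d_C(u)\in\{3,4\}$; (2) $|V(C)|=5$, $d_C(u)=3$, and two of the vertices of $N_C(u)$ are both at distance $2$ on $C$ from the third vertex of $N_C(u)$; (3) $|V(C)|=6$, $d_C(u)=3$, and for every vertex $v$ not lying on any cycle of $\mathcal{C}$, the subgraph of $G$ induced by $V(C)\cup\{v\}$ is triangle-free.
   Context: A chorded cycle is a cycle together with an edge of the graph, not on the cycle, joining two vertices of the cycle. A minimal $r$-system of chorded cycles in $G$ is a collection of $r$ pairwise vertex-disjoint chorded cycles of $G$ whose total number of vertices is as small as possible among all such collections. $N_C(u)=N_G(u)\cap V(C)$ and $d_C(u)=|N_C(u)|$; distance on $C$ means distance in the cycle $C$ itself. *)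

theory Defs
  imports Main
begin

definition simple_graph :: "'a set \<Rightarrow> ('a \<Rightarrow> 'a \<Rightarrow> bool) \<Rightarrow> bool" where
  "simple_graph V E \<longleftrightarrow> finite V \<and> (\<forall>x y. E x y \<longrightarrow> E y x) \<and> (\<forall>x. \<not> E x x)
     \<and> (\<forall>x y. E x y \<longrightarrow> x \<in> V \<and> y \<in> V)"

definition is_cycle :: "'a set \<Rightarrow> ('a \<Rightarrow> 'a \<Rightarrow> bool) \<Rightarrow> 'a list \<Rightarrow> bool" where
  "is_cycle V E cs \<longleftrightarrow> length cs \<ge> 3 \<and> distinct cs \<and> set cs \<subseteq> V
     \<and> (\<forall>i < length cs. E (cs ! i) (cs ! ((i + 1) mod length cs)))"

definition idx_dist :: "nat \<Rightarrow> nat \<Rightarrow> nat \<Rightarrow> nat" where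
  "idx_dist k i j = (let d = (if i \<le> j then j - i else i - j) in min d (k - d))"

definition cyc_dist :: "'a list \<Rightarrow> 'a \<Rightarrow> 'a \<Rightarrow> nat" where
  "cyc_dist cs x y = idx_dist (length cs)
     (THE i. i < length cs \<and> cs ! i = x) (THE j. j < length cs \<and> cs ! j = y)"

text \<open>A chorded cycle: a cycle plus an edge of G, not on the cycle, joining two of its vertices
  (for distinct positions, the pair is a cycle edge iff its cyclic distance is 1).\<close>
definition chorded_cycle :: "'a set \<Rightarrow> ('a \<Rightarrow> 'a \<Rightarrow> bool) \<Rightarrow> 'a list \<Rightarrow> bool" where
  "chorded_cycle V E cs \<longleftrightarrow> is_cycle V E cs \<and>
     (\<exists>i < length cs. \<exists>j < length cs. E (cs ! i) (cs ! j) \<and> idx_dist (length cs) i j \<ge> 2)"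

definition r_system :: "'a set \<Rightarrow> ('a \<Rightarrow> 'a \<Rightarrow> bool) \<Rightarrow> nat \<Rightarrow> 'a list list \<Rightarrow> bool" where
  "r_system V E r Cs \<longleftrightarrow> length Cs = r \<and> (\<forall>C \<in> set Cs. chorded_cycle V E C)
     \<and> (\<forall>i < r. \<forall>j < r. i \<noteq> j \<longrightarrow> set (Cs ! i) \<inter> set (Cs ! j) = {})"

definition minimal_r_system :: "'a set \<Rightarrow> ('a \<Rightarrow> 'a \<Rightarrow> bool) \<Rightarrow> nat \<Rightarrow> 'a list list \<Rightarrow> bool" where
  "minimal_r_system V E r Cs \<longleftrightarrow> r_system V E r Cs \<and>
     (\<forall>Cs'. r_system V E r Cs' \<longrightarrow> sum_list (map length Cs) \<le> sum_list (map length Cs'))"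

definition nbhd_on :: "('a \<Rightarrow> 'a \<Rightarrow> bool) \<Rightarrow> 'a list \<Rightarrow> 'a \<Rightarrow> 'a set" where
  "nbhd_on E cs u = {x \<in> set cs. E u x}"

definition triangle_free_on :: "('a \<Rightarrow> 'a \<Rightarrow> bool) \<Rightarrow> 'a set \<Rightarrow> bool" where
  "triangle_free_on E S \<longleftrightarrow> \<not> (\<exists>x\<in>S. \<exists>y\<in>S. \<exists>z\<in>S. E x y \<and> E y z \<and> E x z)"

end

theory Submission
  imports Defs
begin

(*
  Let u lie outside the system and have neighbours C!i, C!(i+a), C!(i+b) on C (indices mod |C|,
  0 < a < b). Then u followed by the path C!i, ..., C!(i+b) is a cycle of length b + 2 with the
  chord u C!(i+a); it avoids the other cycles of the system, so minimality forces |C| <= b + 2.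
  Applied at every neighbour, this says that cyclically consecutive neighbours of u are at most
  two steps apart on C. Four neighbours therefore force |C| = 4, and three neighbours force
  |C| <= 6, with gaps 1, 2, 2 when |C| = 5 and 2, 2, 2 when |C| = 6. In the hexagonal case a
  triangle on V(C) + v would, together with u, give a chorded cycle on four or five vertices,
  contradicting minimality again.
*)

lemma is_cycle_iff_successively:
  "is_cycle V E cs \<longleftrightarrow> 3 \<le> length cs \<and> distinct cs \<and> set cs \<subseteq> V
     \<and> successively E cs \<and> E (last cs) (hd cs)"
proof (cases "cs = []")
  case False
  let ?n = "length cs"
  have succ: "(i + 1) mod ?n = (if i = ?n - 1 then 0 else Suc i)" if "i < ?n" for i
    using that by (auto simp: mod_Suc)
  have "(\<forall>i < ?n. E (cs ! i) (cs ! ((i + 1) mod ?n)))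
      \<longleftrightarrow> (\<forall>i. Suc i < ?n \<longrightarrow> E (cs ! i) (cs ! Suc i)) \<and> E (cs ! (?n - 1)) (cs ! 0)"
    (is "?cyc \<longleftrightarrow> ?path \<and> ?close")
  proof
    assume cyc: ?cyc
    have ?path
    proof (intro allI impI)
      fix i assume "Suc i < ?n"
      then show "E (cs ! i) (cs ! Suc i)" using cyc[rule_format, of i] by simp
    qed
    moreover have ?close using cyc[rule_format, of "?n - 1"] False by simp
    ultimately show "?path \<and> ?close" ..
  next
    assume path_close: "?path \<and> ?close"
    show ?cyc
    proof (intro allI impI)
      fix i assume "i < ?n"
      then consider "i = ?n - 1" | "Suc i < ?n" by linarith
      then show "E (cs ! i) (cs ! ((i + 1) mod ?n))"
        using path_close succ[OF \<open>i < ?n\<close>] by cases simp_all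
    qed
  qed
  then show ?thesis
    using False by (simp add: is_cycle_def successively_conv_nth last_conv_nth hd_conv_nth)
qed (simp add: is_cycle_def)

lemma is_cycle_rotate1: "is_cycle V E cs \<Longrightarrow> is_cycle V E (rotate1 cs)"
  by (cases cs)
    (auto simp: is_cycle_iff_successively successively_append_iff successively_Cons hd_append)

lemma is_cycle_rotate: "is_cycle V E cs \<Longrightarrow> is_cycle V E (rotate n cs)"
  by (induction n) (simp_all add: is_cycle_rotate1)

lemma chorded_cycle_length_ge_4: "chorded_cycle V E cs \<Longrightarrow> 4 \<le> length cs"
  unfolding chorded_cycle_def is_cycle_def idx_dist_def by (auto simp: Let_def split: if_splits)

lemma chorded_cycleI:
  assumes "is_cycle V E cs" "i < length cs" "j < length cs" "E (cs ! i) (cs ! j)"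
    and "2 \<le> idx_dist (length cs) i j"
  shows "chorded_cycle V E cs"
  using assms unfolding chorded_cycle_def by blast

lemma chorded_cycle_4:
  assumes "distinct [a, b, c, d]" "set [a, b, c, d] \<subseteq> V"
    and "E a b" "E b c" "E c d" "E d a" "E a c"
  shows "chorded_cycle V E [a, b, c, d]"
  by (rule chorded_cycleI[of _ _ _ 0 2])
    (use assms in \<open>simp_all add: is_cycle_iff_successively idx_dist_def\<close>)

lemma chorded_cycle_5:
  assumes "distinct [a, b, c, d, e]" "set [a, b, c, d, e] \<subseteq> V"
    and "E a b" "E b c" "E c d" "E d e" "E e a" "E b d"
  shows "chorded_cycle V E [a, b, c, d, e]"
  by (rule chorded_cycleI[of _ _ _ 1 3])
    (use assms in \<open>simp_all add: is_cycle_iff_successively idx_dist_def\<close>)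

lemma chorded_cycle_fan:
  assumes cyc: "is_cycle V E C" and u: "u \<in> V" "u \<notin> set C"
    and ab: "0 < a" "a < b" "b < length C"
    and edges: "E u (C ! 0)" "E u (C ! a)" "E (C ! b) u"
  shows "chorded_cycle V E (u # take (Suc b) C)"
proof -
  let ?D = "u # take (Suc b) C"
  have "C \<noteq> []" using ab by auto
  have "successively E (take (Suc b) C)"
    using cyc successively_append_iff[of E "take (Suc b) C" "drop (Suc b) C"]
    by (simp add: is_cycle_iff_successively)
  moreover have "last ?D = C ! b"
    using ab by (simp add: take_Suc_conv_app_nth)
  ultimately have "is_cycle V E ?D"
    using cyc u ab edges set_take_subset[of "Suc b" C] \<open>C \<noteq> []\<close>
    by (auto simp: is_cycle_iff_successively successively_Cons hd_conv_nth
        dest: in_set_takeD)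
  moreover have "Suc a < length ?D" "?D ! Suc a = C ! a" "2 \<le> idx_dist (length ?D) 0 (Suc a)"
    using ab by (simp_all add: idx_dist_def)
  ultimately show ?thesis
    unfolding chorded_cycle_def using edges(2) by fastforce
qed

lemma cyc_dist_nth:
  assumes "distinct cs" "i < length cs" "j < length cs"
  shows "cyc_dist cs (cs ! i) (cs ! j) = idx_dist (length cs) i j"
proof -
  have "(THE i'. i' < length cs \<and> cs ! i' = cs ! k) = k" if "k < length cs" for k
    using assms(1) that by (auto simp: nth_eq_iff_index_eq)
  then show ?thesis using assms(2,3) by (simp add: cyc_dist_def)
qed

lemma card_3_iff_less:
  "card S = 3 \<longleftrightarrow> (\<exists>x y z :: 'a :: linorder. x < y \<and> y < z \<and> S = {x, y, z})"
proof
  assume card: "card S = 3"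
  define xs where "xs = sorted_list_of_set S"
  have "finite S" using card card.infinite by fastforce
  then have "length xs = 3" "sorted_wrt (<) xs" "set xs = S"
    using card unfolding xs_def by simp_all
  moreover from \<open>length xs = 3\<close> obtain x y z where "xs = [x, y, z]"
    by (auto simp: numeral_3_eq_3 length_Suc_conv)
  ultimately show "\<exists>x y z. x < y \<and> y < z \<and> S = {x, y, z}" by auto
qed (auto simp: card_insert_if)

lemma ex_four_less_if_card_ge_4:
  fixes S :: "'a :: linorder set"
  assumes "4 \<le> card S"
  shows "\<exists>w x y z. w < x \<and> x < y \<and> y < z \<and> {w, x, y, z} \<subseteq> S"
proof -
  define xs where "xs = take 4 (sorted_list_of_set S)"
  have "finite S" using assms card.infinite by fastforce
  then have "length xs = 4" "sorted_wrt (<) xs" "set xs \<subseteq> S"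
    using assms unfolding xs_def by (auto dest: in_set_takeD)
  moreover from \<open>length xs = 4\<close> obtain w x y z where "xs = [w, x, y, z]"
    by (auto simp: numeral_eq_Suc length_Suc_conv)
  ultimately show ?thesis by auto
qed

definition nbhd_idx :: "('a \<Rightarrow> 'a \<Rightarrow> bool) \<Rightarrow> 'a list \<Rightarrow> 'a \<Rightarrow> nat set" where
  "nbhd_idx E cs u = {i. i < length cs \<and> E u (cs ! i)}"

lemma nbhd_on_conv_nbhd_idx: "nbhd_on E cs u = (!) cs ` nbhd_idx E cs u"
  by (auto simp: nbhd_on_def nbhd_idx_def in_set_conv_nth)

lemma card_nbhd_on: "distinct cs \<Longrightarrow> card (nbhd_on E cs u) = card (nbhd_idx E cs u)"
  unfolding nbhd_on_conv_nbhd_idx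
  by (rule card_image) (auto simp: inj_on_def nbhd_idx_def nth_eq_iff_index_eq)

lemma card_nbhd_idx_le: "card (nbhd_idx E cs u) \<le> length cs"
  using card_mono[of "{..<length cs}" "nbhd_idx E cs u"] by (auto simp: nbhd_idx_def)

lemma r_system_list_update:
  assumes sys: "r_system V E r Cs" and i: "i < length Cs" and D: "chorded_cycle V E D"
    and disj: "\<And>j. j < length Cs \<Longrightarrow> j \<noteq> i \<Longrightarrow> set D \<inter> set (Cs ! j) = {}"
  shows "r_system V E r (Cs[i := D])"
  unfolding r_system_def
proof (intro conjI ballI allI impI)
  show "length (Cs[i := D]) = r" using sys by (simp add: r_system_def)
next
  fix X assume "X \<in> set (Cs[i := D])"
  then show "chorded_cycle V E X"
    using sys D set_update_subset_insert by (fastforce simp: r_system_def)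
next
  fix j l assume "j < r" "l < r" "j \<noteq> l"
  then show "set (Cs[i := D] ! j) \<inter> set (Cs[i := D] ! l) = {}"
    using sys disj[of j] disj[of l] by (cases "j = i"; cases "l = i") (auto simp: r_system_def)
qed

lemma minimal_r_system_length_le:
  assumes min: "minimal_r_system V E r Cs" and C: "C \<in> set Cs"
    and D: "chorded_cycle V E D"
    and avoid: "\<forall>x \<in> set D. x \<in> set C \<or> (\<forall>C' \<in> set Cs. x \<notin> set C')"
  shows "length C \<le> length D"
proof -
  obtain i where i: "i < length Cs" "Cs ! i = C" by (meson C in_set_conv_nth)
  have sys: "r_system V E r Cs" using min by (simp add: minimal_r_system_def)
  have "set D \<inter> set (Cs ! j) = {}" if "j < length Cs" "j \<noteq> i" for j
  proof -
    have "set C \<inter> set (Cs ! j) = {}"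
      using sys i that by (auto simp: r_system_def)
    then show ?thesis using avoid that by auto
  qed
  then have "r_system V E r (Cs[i := D])"
    using r_system_list_update[OF sys i(1) D] by blast
  then have "sum_list (map length Cs) \<le> sum_list (map length (Cs[i := D]))"
    using min by (simp add: minimal_r_system_def)
  also have "\<dots> = sum_list (map length Cs) + length D - length C"
    using i by (simp add: map_update sum_list_update)
  finally show ?thesis
    using elem_le_sum_list[of i "map length Cs"] i by simp
qed

lemma length_le_span_of_three_neighbours:
  assumes cyc: "is_cycle V E C" and u: "u \<in> V" "u \<notin> set C"
    and E_sym: "symp E"
    and shortest: "\<And>D. chorded_cycle V E D \<Longrightarrow> set D \<subseteq> insert u (set C) \<Longrightarrow>
      length C \<le> length D"
    and ab: "0 < a" "a < b" "b < length C"
    and nbrs: "E u (C ! (i mod length C))" "E u (C ! ((i + a) mod length C))"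
      "E u (C ! ((i + b) mod length C))"
  shows "length C \<le> b + 2"
proof -
  let ?R = "rotate i C"
  have R: "?R ! t = C ! ((i + t) mod length C)" if "t < length C" for t
    using that by (simp add: nth_rotate)
  have "C \<noteq> []" using ab by auto
  have "chorded_cycle V E (u # take (Suc b) ?R)"
    using chorded_cycle_fan[OF is_cycle_rotate[OF cyc, of i], of u a b] u ab nbrs sympD[OF E_sym]
      R[of 0] R[of a] R[of b] \<open>C \<noteq> []\<close>
    by simp
  moreover have "set (u # take (Suc b) ?R) \<subseteq> insert u (set C)"
    using set_take_subset[of "Suc b" ?R] by auto
  ultimately show ?thesis
    using shortest ab by fastforce
qed

lemma neighbour_gaps_le_2:
  assumes cyc: "is_cycle V E C" and u: "u \<in> V" "u \<notin> set C"
    and E_sym: "symp E"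
    and shortest: "\<And>D. chorded_cycle V E D \<Longrightarrow> set D \<subseteq> insert u (set C) \<Longrightarrow>
      length C \<le> length D"
    and pqs: "p < q" "q < s" "s < length C"
    and nbrs: "E u (C ! p)" "E u (C ! q)" "E u (C ! s)"
  shows "q - p \<le> 2 \<and> s - q \<le> 2 \<and> length C - s + p \<le> 2"
proof -
  note span = length_le_span_of_three_neighbours[OF cyc u E_sym shortest]
  have "(q + (length C - q + p)) mod length C = p" "(s + (length C - s + p)) mod length C = p"
    "(s + (length C - s + q)) mod length C = q"
    using pqs by simp_all
  then have "length C \<le> (s - p) + 2" "length C \<le> (length C - q + p) + 2"
    "length C \<le> (length C - s + q) + 2"
    using span[of "q - p" "s - p" p] span[of "s - q" "length C - q + p" q]
      span[of "length C - s + p" "length C - s + q" s] pqs nbrs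
    by simp_all
  then show ?thesis using pqs by linarith
qed

lemma pentagon_two_at_distance_2_from_third:
  assumes C: "distinct C" "length C = 5" and pqs: "p < q" "q < s" "s < 5"
    and gaps: "q - p \<le> 2" "s - q \<le> 2" "5 - s + p \<le> 2"
  shows "\<exists>a b c. {C ! p, C ! q, C ! s} = {a, b, c} \<and> a \<noteq> b \<and> a \<noteq> c \<and> b \<noteq> c
    \<and> cyc_dist C a c = 2 \<and> cyc_dist C b c = 2"
proof -
  have "p = 0 \<and> q = 1 \<and> s = 3 \<or> p = 1 \<and> q = 2 \<and> s = 4 \<or> p = 0 \<and> q = 2 \<and> s = 3
    \<or> p = 1 \<and> q = 3 \<and> s = 4 \<or> p = 0 \<and> q = 2 \<and> s = 4"
    using pqs gaps by presburger
  then consider "idx_dist 5 p s = 2" "idx_dist 5 q s = 2" | "idx_dist 5 q p = 2" "idx_dist 5 s p = 2"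
    | "idx_dist 5 p q = 2" "idx_dist 5 s q = 2"
    by (elim disjE) (simp_all add: idx_dist_def)
  moreover note dist = cyc_dist_nth[OF C(1)] nth_eq_iff_index_eq[OF C(1)]
  ultimately show ?thesis
  proof cases
    case 1
    then show ?thesis using dist C(2) pqs
      by (intro exI[of _ "C ! p"] exI[of _ "C ! q"] exI[of _ "C ! s"]) simp
  next
    case 2
    then show ?thesis using dist C(2) pqs
      by (intro exI[of _ "C ! q"] exI[of _ "C ! s"] exI[of _ "C ! p"]) (simp add: insert_commute)
  next
    case 3
    then show ?thesis using dist C(2) pqs
      by (intro exI[of _ "C ! p"] exI[of _ "C ! s"] exI[of _ "C ! q"]) (simp add: insert_commute)
  qed
qed

lemma alternating_hexagon_local_constraints:
  assumes cyc: "is_cycle V E [a0, a1, a2, a3, a4, a5]" and E_sym: "symp E"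
    and uv: "u \<in> V" "v \<in> V"
    and out: "u \<notin> set [a0, a1, a2, a3, a4, a5]" "v \<notin> set [a0, a1, a2, a3, a4, a5]"
    and nbrs: "E u a0" "E u a2" "E u a4" "\<not> E u a1"
    and shortest: "\<And>D. chorded_cycle V E D \<Longrightarrow>
      set D \<subseteq> insert u (insert v (set [a0, a1, a2, a3, a4, a5])) \<Longrightarrow> 6 \<le> length D"
  shows "\<not> E a0 a2 \<and> \<not> E a1 a3 \<and> \<not> (E v a0 \<and> E v a1) \<and> \<not> (E v a1 \<and> E v a2)
    \<and> \<not> (E v a0 \<and> E v a3 \<and> E a0 a3)"
proof -
  let ?W = "insert u (insert v (set [a0, a1, a2, a3, a4, a5]))"
  have hex: "distinct [a0, a1, a2, a3, a4, a5]" "?W \<subseteq> V"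
    "E a0 a1" "E a1 a2" "E a2 a3" "E a3 a4" "E a4 a5" "E a5 a0"
    using cyc uv by (simp_all add: is_cycle_iff_successively)
  have no4: False
    if "distinct [a, b, c, d]" "set [a, b, c, d] \<subseteq> ?W" "E a b" "E b c" "E c d" "E d a" "E a c"
    for a b c d
    using shortest[OF chorded_cycle_4[OF that(1) subset_trans[OF that(2) hex(2)] that(3-7)] that(2)]
    by simp
  have no5: False
    if "distinct [a, b, c, d, e]" "set [a, b, c, d, e] \<subseteq> ?W"
      "E a b" "E b c" "E c d" "E d e" "E e a" "E b d"
    for a b c d e
    using shortest[OF chorded_cycle_5[OF that(1) subset_trans[OF that(2) hex(2)] that(3-8)] that(2)]
    by simp
  have vu: "v \<noteq> u" if "E v a1" using that nbrs(4) by blast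
  note facts = hex hex(3-8)[THEN sympD[OF E_sym]] out nbrs nbrs(1-3)[THEN sympD[OF E_sym]]
  show ?thesis
  proof (intro conjI notI; (elim conjE)?)
    show False if "E a0 a2"
      by (rule no4[of a0 a1 a2 u]) (use that facts in auto)
    show False if "E a1 a3"
      by (rule no5[of u a2 a1 a3 a4]) (use that facts sympD[OF E_sym that] in auto)
    show False if "E v a0" "E v a1"
      by (rule no5[of u a0 v a1 a2]) (use that facts sympD[OF E_sym that(1)] vu in auto)
    show False if "E v a1" "E v a2"
      by (rule no5[of a0 a1 v a2 u]) (use that facts sympD[OF E_sym that(1)] vu in auto)
    show False if "E v a0" "E v a3" "E a0 a3"
      by (rule no5[of a2 a3 v a0 a1])
        (use that facts sympD[OF E_sym that(2)] sympD[OF E_sym that(3)] in auto)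
  qed
qed

lemma triangle_free_alternating_hexagon:
  assumes E_sym: "symp E" and irrefl: "irreflp E"
    and cyc: "is_cycle V E [a0, a1, a2, a3, a4, a5]" and uv: "u \<in> V" "v \<in> V"
    and out: "u \<notin> set [a0, a1, a2, a3, a4, a5]" "v \<notin> set [a0, a1, a2, a3, a4, a5]"
    and nbrs: "E u a0" "E u a2" "E u a4" "\<not> E u a1" "\<not> E u a3" "\<not> E u a5"
    and shortest: "\<And>D. chorded_cycle V E D \<Longrightarrow>
      set D \<subseteq> insert u (insert v (set [a0, a1, a2, a3, a4, a5])) \<Longrightarrow> 6 \<le> length D"
  shows "triangle_free_on E (set [a0, a1, a2, a3, a4, a5] \<union> {v})"
proof -
  note constraints = alternating_hexagon_local_constraints[OF _ E_sym uv]
  have rot: "is_cycle V E [a2, a3, a4, a5, a0, a1]" "is_cycle V E [a4, a5, a0, a1, a2, a3]"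
    using is_cycle_rotate[OF cyc, of 2] is_cycle_rotate[OF cyc, of 4]
    by (simp_all add: numeral_eq_Suc)
  have set_rot: "set [a2, a3, a4, a5, a0, a1] = set [a0, a1, a2, a3, a4, a5]"
    "set [a4, a5, a0, a1, a2, a3] = set [a0, a1, a2, a3, a4, a5]" by auto
  \<comment> \<open>Rotating the hexagon by two positions preserves all hypotheses, so c2 and c4 are
    instances of c0.\<close>
  have c0:
    "\<not> E a0 a2 \<and> \<not> E a1 a3 \<and> \<not> (E v a0 \<and> E v a1) \<and> \<not> (E v a1 \<and> E v a2)
      \<and> \<not> (E v a0 \<and> E v a3 \<and> E a0 a3)"
    by (rule constraints[OF cyc out nbrs(1-4) shortest])
  have c2: "\<not> E a2 a4 \<and> \<not> E a3 a5 \<and> \<not> (E v a2 \<and> E v a3) \<and> \<not> (E v a3 \<and> E v a4)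
      \<and> \<not> (E v a2 \<and> E v a5 \<and> E a2 a5)"
    by (rule constraints[OF rot(1)])
      (use out nbrs shortest in \<open>simp_all only: set_rot not_False_eq_True\<close>)
  have c4: "\<not> E a4 a0 \<and> \<not> E a5 a1 \<and> \<not> (E v a4 \<and> E v a5) \<and> \<not> (E v a5 \<and> E v a0)
      \<and> \<not> (E v a4 \<and> E v a1 \<and> E a4 a1)"
    by (rule constraints[OF rot(2)])
      (use out nbrs shortest in \<open>simp_all only: set_rot not_False_eq_True\<close>)
  have E_comm: "E x y \<longleftrightarrow> E y x" for x y
    using E_sym by (blast dest: sympD)
  show ?thesis
    unfolding triangle_free_on_def
  proof (clarify)
    fix x y z
    assume "x \<in> set [a0, a1, a2, a3, a4, a5] \<union> {v}" "y \<in> set [a0, a1, a2, a3, a4, a5] \<union> {v}"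
      "z \<in> set [a0, a1, a2, a3, a4, a5] \<union> {v}" and "E x y" "E y z" "E x z"
    \<comment> \<open>Three vertices of the hexagon always include two at distance 2; a triangle through v
      uses two consecutive, two distance-2 or two opposite vertices of the hexagon.\<close>
    then show False
      using c0 c2 c4 irrefl
      by (simp only: set_simps Un_iff insert_iff empty_iff simp_thms)
        (elim disjE; simp add: E_comm irreflp_def)
  qed
qed

lemma triangle_free_hexagon_of_neighbour_gaps:
  assumes cyc: "is_cycle V E C" and len: "length C = 6"
    and E_sym: "symp E" and irrefl: "irreflp E"
    and uv: "u \<in> V" "v \<in> V" and out: "u \<notin> set C" "v \<notin> set C"
    and nbrs: "nbhd_idx E C u = {p, q, s}" "p < q" "q < s"
    and gaps: "q - p \<le> 2" "s - q \<le> 2" "length C - s + p \<le> 2"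
    and shortest: "\<And>D. chorded_cycle V E D \<Longrightarrow>
      set D \<subseteq> insert u (insert v (set C)) \<Longrightarrow> 6 \<le> length D"
  shows "triangle_free_on E (set C \<union> {v})"
proof -
  have adj: "E u (C ! i) \<longleftrightarrow> i \<in> {p, q, s}" if "i < 6" for i
  proof -
    have "i \<in> nbhd_idx E C u \<longleftrightarrow> E u (C ! i)" using that len by (simp add: nbhd_idx_def)
    then show ?thesis by (simp only: nbrs(1))
  qed
  have "s < 6" using nbrs(1) len by (auto simp: nbhd_idx_def)
  then have "p \<le> 1" "q = p + 2" "s = p + 4" using nbrs(2,3) gaps len by linarith+
  have "\<exists>a0 a1 a2 a3 a4 a5. xs = [a0, a1, a2, a3, a4, a5]" if "length xs = 6" for xs :: "'a list"
    using that by (auto simp: numeral_eq_Suc length_Suc_conv)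
  moreover have "length (rotate p C) = 6" using len by simp
  ultimately obtain a0 a1 a2 a3 a4 a5 where R: "rotate p C = [a0, a1, a2, a3, a4, a5]"
    by blast
  have nth_R: "[a0, a1, a2, a3, a4, a5] ! t = C ! ((p + t) mod 6)" if "t < 6" for t
    using nth_rotate[of t C p] that len R by simp
  have a: "a0 = C ! p" "a1 = C ! ((p + 1) mod 6)" "a2 = C ! ((p + 2) mod 6)"
    "a3 = C ! ((p + 3) mod 6)" "a4 = C ! ((p + 4) mod 6)" "a5 = C ! ((p + 5) mod 6)"
    using nth_R[of 0] nth_R[of 1] nth_R[of 2] nth_R[of 3] nth_R[of 4] nth_R[of 5] \<open>p \<le> 1\<close>
    by simp_all
  consider "p = 0" | "p = 1" using \<open>p \<le> 1\<close> by linarith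
  then have "E u a0 \<and> E u a2 \<and> E u a4 \<and> \<not> E u a1 \<and> \<not> E u a3 \<and> \<not> E u a5"
    using a adj \<open>q = p + 2\<close> \<open>s = p + 4\<close> by cases simp_all
  then have nbrs': "E u a0" "E u a2" "E u a4" "\<not> E u a1" "\<not> E u a3" "\<not> E u a5"
    by simp_all
  have set_R: "set [a0, a1, a2, a3, a4, a5] = set C"
    using R by (metis set_rotate)
  have "is_cycle V E [a0, a1, a2, a3, a4, a5]"
    using is_cycle_rotate[OF cyc, of p] R by simp
  then have "triangle_free_on E (set [a0, a1, a2, a3, a4, a5] \<union> {v})"
    by (rule triangle_free_alternating_hexagon[OF E_sym irrefl _ uv _ _ nbrs'])
      (use out shortest in \<open>simp_all only: set_R not_False_eq_True\<close>)
  then show ?thesis by (simp only: set_R)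
qed

locale outside_vertex =
  fixes V :: "'a set" and E :: "'a \<Rightarrow> 'a \<Rightarrow> bool" and r :: nat and Cs :: "'a list list"
    and C :: "'a list" and u :: 'a
  assumes graph: "simple_graph V E"
    and minimal: "minimal_r_system V E r Cs"
    and C_in: "C \<in> set Cs"
    and u_in: "u \<in> V"
    and u_outside: "\<forall>D \<in> set Cs. u \<notin> set D"
begin

lemma E_sym: "symp E" and E_irrefl: "irreflp E"
  using graph by (auto simp: simple_graph_def symp_def irreflp_def)

lemma C_chorded: "chorded_cycle V E C"
  using minimal C_in by (auto simp: minimal_r_system_def r_system_def)

lemma C_cycle: "is_cycle V E C"
  using C_chorded by (simp add: chorded_cycle_def)

lemma C_distinct: "distinct C"
  using C_cycle by (simp add: is_cycle_def)

lemma u_notin_C: "u \<notin> set C"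
  using C_in u_outside by blast

lemma length_C_ge_4: "4 \<le> length C"
  using C_chorded by (rule chorded_cycle_length_ge_4)

lemma length_C_le_chorded_cycle:
  assumes "chorded_cycle V E D" "set D \<subseteq> insert u (insert v (set C))"
    and "\<forall>D' \<in> set Cs. v \<notin> set D'"
  shows "length C \<le> length D"
  using minimal_r_system_length_le[OF minimal C_in assms(1)] assms(2,3) u_outside by blast

lemma nbhd_idx_gaps:
  assumes "p < q" "q < s" "{p, q, s} \<subseteq> nbhd_idx E C u"
  shows "q - p \<le> 2 \<and> s - q \<le> 2 \<and> length C - s + p \<le> 2"
  using neighbour_gaps_le_2[OF C_cycle u_in u_notin_C E_sym, of p q s]
    length_C_le_chorded_cycle[of _ u] u_outside assms
  by (auto simp: nbhd_idx_def)

lemma length_C_eq_4_if_four_neighbours: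
  assumes "4 \<le> card (nbhd_idx E C u)"
  shows "length C = 4"
proof -
  from ex_four_less_if_card_ge_4[OF assms] obtain p q s t
    where pqst: "p < q" "q < s" "s < t" "{p, q, s, t} \<subseteq> nbhd_idx E C u"
    by blast
  then have "{p, q, t} \<subseteq> nbhd_idx E C u" "{q, s, t} \<subseteq> nbhd_idx E C u" by auto
  then have "t - q \<le> 2" "length C - t + q \<le> 2"
    using nbhd_idx_gaps[of p q t] nbhd_idx_gaps[of q s t] pqst(1-3) by auto
  then show ?thesis using pqst(1-3) length_C_ge_4 by linarith
qed

lemma three_neighbours_cases:
  assumes "card (nbhd_idx E C u) = 3"
  shows "length C = 4
    \<or> length C = 5 \<and> (\<exists>a b c. nbhd_on E C u = {a, b, c} \<and> a \<noteq> b \<and> a \<noteq> c \<and> b \<noteq> c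
                  \<and> cyc_dist C a c = 2 \<and> cyc_dist C b c = 2)
    \<or> length C = 6 \<and> (\<forall>v \<in> V. (\<forall>D \<in> set Cs. v \<notin> set D) \<longrightarrow> triangle_free_on E (set C \<union> {v}))"
proof -
  obtain p q s where P: "nbhd_idx E C u = {p, q, s}" "p < q" "q < s"
    using assms unfolding card_3_iff_less by blast
  then have "s < length C" and gaps: "q - p \<le> 2" "s - q \<le> 2" "length C - s + p \<le> 2"
    using nbhd_idx_gaps[of p q s] by (auto simp: nbhd_idx_def)
  then consider (len4) "length C = 4" | (len5) "length C = 5" | (len6) "length C = 6"
    using P(2,3) length_C_ge_4 by linarith
  then show ?thesis
  proof cases
    case len5
    then show ?thesis
      using pentagon_two_at_distance_2_from_third[OF C_distinct len5 P(2,3)] gaps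
        \<open>s < length C\<close> P(1)
      by (simp add: nbhd_on_conv_nbhd_idx)
  next
    case len6
    have "triangle_free_on E (set C \<union> {v})" if "v \<in> V" "\<forall>D \<in> set Cs. v \<notin> set D" for v
      using triangle_free_hexagon_of_neighbour_gaps[OF C_cycle len6 E_sym E_irrefl u_in that(1)
          u_notin_C _ P gaps] length_C_le_chorded_cycle[of _ v] that C_in len6
      by auto
    then show ?thesis using len6 by blast
  qed simp
qed

end

theorem lemma3p2:
  fixes V :: "'a set" and E :: "'a \<Rightarrow> 'a \<Rightarrow> bool" and r :: nat
    and Cs :: "'a list list" and C :: "'a list" and u :: 'a
  assumes "simple_graph V E"
    and "r \<ge> 1"
    and "minimal_r_system V E r Cs"
    and "C \<in> set Cs"
    and "u \<in> V"
    and "\<forall>D \<in> set Cs. u \<notin> set D"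
    and "card (nbhd_on E C u) \<ge> 3"
  shows "(length C = 4 \<and> card (nbhd_on E C u) \<in> {3, 4})
       \<or> (length C = 5 \<and> card (nbhd_on E C u) = 3 \<and>
          (\<exists>a b c. nbhd_on E C u = {a, b, c} \<and> a \<noteq> b \<and> a \<noteq> c \<and> b \<noteq> c
                  \<and> cyc_dist C a c = 2 \<and> cyc_dist C b c = 2))
       \<or> (length C = 6 \<and> card (nbhd_on E C u) = 3 \<and>
          (\<forall>v \<in> V. (\<forall>D \<in> set Cs. v \<notin> set D) \<longrightarrow> triangle_free_on E (set C \<union> {v})))"
proof -
  interpret outside_vertex V E r Cs C u
    using assms(1,3-6) by unfold_locales
  have card_eq: "card (nbhd_on E C u) = card (nbhd_idx E C u)"
    using C_distinct by (rule card_nbhd_on)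
  consider "4 \<le> card (nbhd_idx E C u)" | "card (nbhd_idx E C u) = 3"
    using assms(7) card_eq by linarith
  then show ?thesis
  proof cases
    case 1
    then have "length C = 4" by (rule length_C_eq_4_if_four_neighbours)
    then show ?thesis using card_eq card_nbhd_idx_le[of E C u] 1 by auto
  next
    case 2
    then show ?thesis using three_neighbours_cases card_eq by auto
  qed
qed

end
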